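(* Let $E\subseteq\mathbb{R}$ be a measurable weakly nowhere dense set. Then the set $D_L(E)$ of points of $E$ which are left density points of $E$ is of first category in $E$ (with the subspace topology), and likewise the set $D_R(E)$ of points of $E$ which are right density points of $E$ is of first category in $E$.
   Context: $|A|$ denotes Lebesgue measure. A set $E\subseteq\mathbb{R}$ is weakly nowhere dense if for every (nondegenerate) interval $J$ the set $E\cap J$ does not have full measure in $J$, i.e. $|J\setminus E|>0$. A point $x$ is a left (resp. right) density point of $E$ if for every sequence of intervals $I_n=[x-r_n,x]$ (resp. $I_n=[x,x+r_n]$) with $r_n\searrow0$ we have $|E\cap I_n|/|I_n|\to1$. *)

theory Defs
  imports "HOL-Analysis.Analysis"
begin

definition weakly_nowhere_dense :: "real set \<Rightarrow> bool" where
  "weakly_nowhere_dense E \<longleftrightarrow>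
     (\<forall>a b. a < b \<longrightarrow> emeasure lebesgue ({a..b} - E) > 0)"

definition left_density_point :: "real set \<Rightarrow> real \<Rightarrow> bool" where
  "left_density_point E x \<longleftrightarrow>
     (\<forall>r :: nat \<Rightarrow> real. (\<forall>n. r n > 0) \<and> decseq r \<and> r \<longlonglongrightarrow> 0 \<longrightarrow>
        (\<lambda>n. measure lebesgue (E \<inter> {x - r n .. x}) / r n) \<longlonglongrightarrow> 1)"

definition right_density_point :: "real set \<Rightarrow> real \<Rightarrow> bool" where
  "right_density_point E x \<longleftrightarrow>
     (\<forall>r :: nat \<Rightarrow> real. (\<forall>n. r n > 0) \<and> decseq r \<and> r \<longlonglongrightarrow> 0 \<longrightarrow>
        (\<lambda>n. measure lebesgue (E \<inter> {x .. x + r n}) / r n) \<longlonglongrightarrow> 1)"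

definition nowhere_dense_in :: "'a topology \<Rightarrow> 'a set \<Rightarrow> bool" where
  "nowhere_dense_in X A \<longleftrightarrow> A \<subseteq> topspace X \<and> X interior_of (X closure_of A) = {}"

definition first_category_in :: "'a topology \<Rightarrow> 'a set \<Rightarrow> bool" where
  "first_category_in X A \<longleftrightarrow>
     (\<exists>F :: nat \<Rightarrow> 'a set. (\<forall>n. nowhere_dense_in X (F n)) \<and> A \<subseteq> (\<Union>n. F n))"

end

theory Submission
  imports Defs
begin

(*
  A left density point x of E has relative measure at least 1/2 in every left window
  [x - r, x] with r <= 1/(n+1), for some n, so D_L(E) is covered by the sets G_n of such
  points of E. Each G_n is relatively closed in E, because the measure of E in a window of
  fixed length is 2-Lipschitz in its position. Each G_n has empty interior in E: if all points
  of E near x were in G_n, weak nowhere density gives an interval [u, v] just left of x in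
  which E has relative measure < 1/2; the first point s of E to the right of v is a limit of
  points of G_n, hence in G_n, yet its window [u, s] contains no more of E than [u, v] does.
  Weak nowhere density yields such [u, v] because otherwise the complement of E would have
  relative measure at most 1/2 in every subinterval of an interval, and covering it by
  nonoverlapping intervals of almost the same total measure shows that it is null.
  Right density points are handled by the reflection x \<mapsto> -x.
*)

(* w x r is the measure of E in the window of length r at x *)
definition half_dense_at :: "(real \<Rightarrow> real \<Rightarrow> real) \<Rightarrow> real \<Rightarrow> real \<Rightarrow> bool" where
  "half_dense_at w h x \<longleftrightarrow> (\<forall>r. 0 < r \<and> r \<le> h \<longrightarrow> r / 2 \<le> w x r)"

lemma nowhere_dense_in_Int_closed:
  fixes E C :: "'a::metric_space set"
  assumes "closed C"
    and avoid: "\<And>x e. x \<in> E \<Longrightarrow> 0 < e \<Longrightarrow> \<exists>y\<in>E. dist y x < e \<and> y \<notin> C"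
  shows "nowhere_dense_in (top_of_set E) (E \<inter> C)"
proof -
  have "top_of_set E closure_of (E \<inter> C) = E \<inter> C"
    by (simp add: closure_of_eq closedin_closed_Int \<open>closed C\<close>)
  moreover have "T = {}" if T: "openin (top_of_set E) T" "T \<subseteq> E \<inter> C" for T
  proof (rule ccontr)
    assume "T \<noteq> {}"
    then obtain z where "z \<in> T" by blast
    then obtain e where "0 < e" and ball: "\<And>y. y \<in> E \<Longrightarrow> dist y z < e \<Longrightarrow> y \<in> T"
      using T(1) by (force simp: openin_euclidean_subtopology_iff)
    obtain y where "y \<in> E" "dist y z < e" "y \<notin> C"
      using avoid \<open>z \<in> T\<close> T(2) \<open>0 < e\<close> by blast
    then show False using ball T(2) by blast
  qed
  ultimately show ?thesis
    by (simp add: nowhere_dense_in_def interior_of_eq_empty)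
qed

lemma closed_half_dense:
  assumes "\<And>r. continuous_on UNIV (\<lambda>x. w x r)"
  shows "closed {x. half_dense_at w h x}"
proof -
  have "{x. half_dense_at w h x} = (\<Inter>r\<in>{0<..h}. {x. r / 2 \<le> w x r})"
    by (auto simp: half_dense_at_def)
  moreover have "closed {x. r / 2 \<le> w x r}" for r
    by (rule closed_Collect_le) (simp_all add: assms)
  ultimately show ?thesis
    by auto
qed

lemma half_dense_at_if_density_one:
  assumes density: "\<forall>r::nat \<Rightarrow> real. (\<forall>n. 0 < r n) \<and> decseq r \<and> r \<longlonglongrightarrow> 0 \<longrightarrow>
      (\<lambda>n. w x (r n) / r n) \<longlonglongrightarrow> 1"
  shows "\<exists>n::nat. half_dense_at w (1 / Suc n) x"
proof -
  have "eventually (\<lambda>r. 1 / 2 < w x r / r) (at_right 0)"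
  proof (rule sequentially_imp_eventually_at_right[of 0 1])
    fix f :: "nat \<Rightarrow> real"
    assume "\<And>n. 0 < f n" "decseq f" "f \<longlonglongrightarrow> 0"
    then have "(\<lambda>n. w x (f n) / f n) \<longlonglongrightarrow> 1"
      using density by blast
    then show "eventually (\<lambda>n. 1 / 2 < w x (f n) / f n) sequentially"
      by (rule order_tendstoD) simp
  qed simp
  then obtain b where "0 < b" and b: "\<And>r. 0 < r \<Longrightarrow> r < b \<Longrightarrow> 1 / 2 < w x r / r"
    by (auto simp: eventually_at_right_field)
  obtain n :: nat where "inverse (Suc n) < b"
    using reals_Archimedean[OF \<open>0 < b\<close>] by blast
  have "half_dense_at w (1 / Suc n) x"
    unfolding half_dense_at_def
  proof (intro allI impI)
    fix r :: real assume r: "0 < r \<and> r \<le> 1 / Suc n"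
    then have "1 / 2 < w x r / r"
      using b \<open>inverse (Suc n) < b\<close> by (simp add: inverse_eq_divide)
    then show "r / 2 \<le> w x r"
      using r by (simp add: field_simps)
  qed
  then show ?thesis ..
qed

lemma first_category_density_points:
  fixes E :: "real set" and w :: "real \<Rightarrow> real \<Rightarrow> real"
  assumes cont: "\<And>r. continuous_on UNIV (\<lambda>x. w x r)"
    and sparse: "\<And>x e h. x \<in> E \<Longrightarrow> 0 < e \<Longrightarrow> 0 < h \<Longrightarrow> \<exists>y\<in>E. dist y x < e \<and> \<not> half_dense_at w h y"
  shows "first_category_in (top_of_set E)
           {x \<in> E. \<forall>r::nat \<Rightarrow> real. (\<forall>n. 0 < r n) \<and> decseq r \<and> r \<longlonglongrightarrow> 0 \<longrightarrow>
              (\<lambda>n. w x (r n) / r n) \<longlonglongrightarrow> 1}" (is "first_category_in _ ?D")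
  unfolding first_category_in_def
proof (intro exI conjI allI)
  fix n :: nat
  show "nowhere_dense_in (top_of_set E) (E \<inter> {x. half_dense_at w (1 / Suc n) x})"
    by (rule nowhere_dense_in_Int_closed[OF closed_half_dense[OF cont]]) (use sparse in auto)
next
  show "?D \<subseteq> (\<Union>n. E \<inter> {x. half_dense_at w (1 / Suc n) x})"
    using half_dense_at_if_density_one by blast
qed

lemma measure_Int_Union_intervals_le_half:
  fixes A :: "real set"
  assumes A: "A \<in> lmeasurable"
    and half: "\<And>u v. c \<le> u \<Longrightarrow> u < v \<Longrightarrow> v \<le> d \<Longrightarrow> measure lebesgue (A \<inter> {u..v}) \<le> (v - u) / 2"
    and "finite \<F>" and intervals: "\<And>K. K \<in> \<F> \<Longrightarrow> K \<subseteq> {c..d} \<and> (\<exists>a b. K = {a..b})"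
    and overlap: "pairwise (\<lambda>S T. negligible (S \<inter> T)) \<F>"
  shows "measure lebesgue (A \<inter> \<Union>\<F>) \<le> measure lebesgue (\<Union>\<F>) / 2"
proof -
  have K: "measure lebesgue (A \<inter> K) \<le> measure lebesgue K / 2" if "K \<in> \<F>" for K
  proof -
    obtain a b where K_eq: "K = {a..b}"
      using intervals[OF \<open>K \<in> \<F>\<close>] by blast
    have "{a..b} \<subseteq> {c..d}"
      using intervals[OF \<open>K \<in> \<F>\<close>] K_eq by simp
    show ?thesis
    proof (cases "a < b")
      case True
      with \<open>{a..b} \<subseteq> {c..d}\<close> have "c \<le> a" "b \<le> d"
        by auto
      with True show ?thesis
        using half[of a b] K_eq by simp
    next
      case False
      then have "A \<inter> K \<subseteq> {a}"
        using K_eq by auto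
      then have "measure lebesgue (A \<inter> K) = 0"
        by (intro negligible_imp_measure0 negligible_subset[OF negligible_sing])
      then show ?thesis by simp
    qed
  qed
  have Klm: "K \<in> lmeasurable" if "K \<in> \<F>" for K
    using intervals[OF that] by (elim conjE exE) simp
  have "measure lebesgue (A \<inter> \<Union>\<F>) = measure lebesgue (\<Union>K\<in>\<F>. A \<inter> K)"
    by (simp only: Int_Union)
  also have "\<dots> \<le> (\<Sum>K\<in>\<F>. measure lebesgue (A \<inter> K))"
    using A Klm by (intro measure_UNION_le \<open>finite \<F>\<close>) (auto intro: fmeasurableD)
  also have "\<dots> \<le> (\<Sum>K\<in>\<F>. measure lebesgue K / 2)"
    by (rule sum_mono) (rule K)
  also have "\<dots> = measure lebesgue (\<Union>\<F>) / 2"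
    using measure_negligible_finite_Union[OF \<open>finite \<F>\<close> Klm overlap]
    by (simp add: sum_divide_distrib)
  finally show ?thesis .
qed

lemma lmeasurable_outer_finite_intervals:
  fixes A :: "real set"
  assumes A: "A \<in> lmeasurable" "A \<subseteq> {c..d}" and "0 < e"
  obtains \<F> R where "finite \<F>" "\<And>K. K \<in> \<F> \<Longrightarrow> K \<subseteq> {c..d} \<and> (\<exists>a b. K = {a..b})"
    "pairwise (\<lambda>S T. negligible (S \<inter> T)) \<F>" "A \<subseteq> \<Union>\<F> \<union> R" "R \<in> lmeasurable"
    "measure lebesgue R < e" "measure lebesgue (\<Union>\<F>) \<le> measure lebesgue A + e"
proof -
  obtain \<D> where "countable \<D>"
    and intervals: "\<And>K. K \<in> \<D> \<Longrightarrow> K \<subseteq> {c..d} \<and> (\<exists>a b. K = {a..b})"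
    and nonoverlapping: "pairwise (\<lambda>S T. interior S \<inter> interior T = {}) \<D>"
    and cover: "A \<subseteq> \<Union>\<D>" "\<Union>\<D> \<in> lmeasurable"
    and outer: "measure lebesgue (\<Union>\<D>) \<le> measure lebesgue A + e"
    by (rule measurable_outer_intervals_bounded[of A c d e]) (use A \<open>0 < e\<close> in simp_all)
  have Dlm: "K \<in> lmeasurable" if "K \<in> \<D>" for K
    using intervals[OF that] by (elim conjE exE) simp
  have "measure lebesgue (\<Union>\<D>') \<le> measure lebesgue {c..d}" if "\<D>' \<subseteq> \<D>" "finite \<D>'" for \<D>'
  proof (rule measure_mono_fmeasurable)
    show "\<Union>\<D>' \<subseteq> {c..d}"
      using that intervals by fastforce
    show "\<Union>\<D>' \<in> sets lebesgue"
      using that Dlm by (auto intro: fmeasurableD fmeasurable.finite_Union)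
  qed simp
  then obtain \<F> where "\<F> \<subseteq> \<D>" "finite \<F>"
    and inner: "measure lebesgue (\<Union>\<D>) - e < measure lebesgue (\<Union>\<F>)"
    using measure_countable_Union_approachable[OF \<open>countable \<D>\<close> \<open>0 < e\<close> Dlm] by blast
  have Flm: "\<Union>\<F> \<in> lmeasurable"
    using \<open>\<F> \<subseteq> \<D>\<close> \<open>finite \<F>\<close> Dlm by (auto intro: fmeasurable.finite_Union)
  have "negligible (S \<inter> T)" if "S \<in> \<F>" "T \<in> \<F>" "S \<noteq> T" for S T
  proof -
    have "\<exists>a b. S = {a..b}" "\<exists>a b. T = {a..b}"
      using intervals that(1,2) \<open>\<F> \<subseteq> \<D>\<close> by (meson subsetD)+
    then obtain a b a' b' where "S = {a..b}" "T = {a'..b'}"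
      by metis
    moreover have "interior S \<inter> interior T = {}"
      using nonoverlapping that \<open>\<F> \<subseteq> \<D>\<close> by (auto simp: pairwise_def)
    ultimately show ?thesis
      by (simp add: negligible_convex_interior convex_Int)
  qed
  then have overlap: "pairwise (\<lambda>S T. negligible (S \<inter> T)) \<F>"
    by (simp add: pairwise_def)
  have "measure lebesgue (\<Union>\<D> - \<Union>\<F>) = measure lebesgue (\<Union>\<D>) - measure lebesgue (\<Union>\<F>)"
    using Flm cover \<open>\<F> \<subseteq> \<D>\<close> by (intro measurable_measure_Diff) auto
  moreover have "measure lebesgue (\<Union>\<F>) \<le> measure lebesgue (\<Union>\<D>)"
    using Flm cover \<open>\<F> \<subseteq> \<D>\<close> by (intro measure_mono_fmeasurable) auto
  ultimately show ?thesis
  proof (intro that[of \<F> "\<Union>\<D> - \<Union>\<F>"] \<open>finite \<F>\<close> overlap)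
    show "K \<subseteq> {c..d} \<and> (\<exists>a b. K = {a..b})" if "K \<in> \<F>" for K
      using \<open>\<F> \<subseteq> \<D>\<close> that by (intro intervals) blast
    show "A \<subseteq> \<Union>\<F> \<union> (\<Union>\<D> - \<Union>\<F>)" "\<Union>\<D> - \<Union>\<F> \<in> lmeasurable"
      using cover Flm by (auto intro: fmeasurable.Diff)
  qed (use inner outer in linarith)+
qed

lemma measure_eq_0_if_Int_intervals_le_half:
  fixes A :: "real set"
  assumes A: "A \<in> lmeasurable" "A \<subseteq> {c..d}"
    and half: "\<And>u v. c \<le> u \<Longrightarrow> u < v \<Longrightarrow> v \<le> d \<Longrightarrow> measure lebesgue (A \<inter> {u..v}) \<le> (v - u) / 2"
  shows "measure lebesgue A = 0"
proof -
  have "measure lebesgue A \<le> measure lebesgue A / 2 + e" if "0 < e" for e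
  proof -
    obtain \<F> R where "finite \<F>"
      and intervals: "\<And>K. K \<in> \<F> \<Longrightarrow> K \<subseteq> {c..d} \<and> (\<exists>a b. K = {a..b})"
      and overlap: "pairwise (\<lambda>S T. negligible (S \<inter> T)) \<F>"
      and cover: "A \<subseteq> \<Union>\<F> \<union> R" "R \<in> lmeasurable"
      and small: "measure lebesgue R < e / 2" "measure lebesgue (\<Union>\<F>) \<le> measure lebesgue A + e / 2"
      by (rule lmeasurable_outer_finite_intervals[OF A, of "e / 2"]) (use \<open>0 < e\<close> in simp_all)
    have Flm: "\<Union>\<F> \<in> lmeasurable"
      using \<open>finite \<F>\<close> intervals by (intro fmeasurable.finite_Union) (auto elim!: conjE exE)
    have "measure lebesgue A \<le> measure lebesgue ((A \<inter> \<Union>\<F>) \<union> R)"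
      using cover A Flm by (intro measure_mono_fmeasurable) auto
    also have "\<dots> \<le> measure lebesgue (A \<inter> \<Union>\<F>) + measure lebesgue R"
      using A Flm cover by (intro measure_Un_le) (auto intro: sets.Int fmeasurableD)
    also have "\<dots> \<le> measure lebesgue (\<Union>\<F>) / 2 + measure lebesgue R"
      using measure_Int_Union_intervals_le_half[OF A(1) half \<open>finite \<F>\<close> intervals overlap] by simp
    finally show ?thesis
      using small \<open>0 < e\<close> by linarith
  qed
  then have "measure lebesgue A \<le> measure lebesgue A / 2"
    by (rule field_le_epsilon)
  then show ?thesis
    using measure_nonneg[of lebesgue A] by linarith
qed

lemma weakly_nowhere_dense_sparse_subinterval:
  fixes E :: "real set"
  assumes "E \<in> sets lebesgue" "weakly_nowhere_dense E" "c < d"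
  obtains u v where "c \<le> u" "u < v" "v \<le> d" "measure lebesgue (E \<inter> {u..v}) < (v - u) / 2"
proof -
  define A where "A = {c..d} - E"
  have A: "A \<in> lmeasurable"
    by (simp add: A_def assms(1) fmeasurable_Diff)
  have "0 < emeasure lebesgue A"
    using assms(2,3) by (simp add: A_def weakly_nowhere_dense_def)
  then have "measure lebesgue A \<noteq> 0"
    using A by (simp add: emeasure_eq_measure2)
  moreover have "A \<subseteq> {c..d}"
    by (auto simp: A_def)
  ultimately obtain u v where uv: "c \<le> u" "u < v" "v \<le> d"
    and "(v - u) / 2 < measure lebesgue (A \<inter> {u..v})"
    using measure_eq_0_if_Int_intervals_le_half[OF A] by (meson not_le)
  moreover have "measure lebesgue (A \<inter> {u..v}) = (v - u) - measure lebesgue (E \<inter> {u..v})"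
  proof -
    have "A \<inter> {u..v} = {u..v} - E \<inter> {u..v}"
      using uv by (auto simp: A_def)
    then show ?thesis
      using uv assms(1) by (simp add: measurable_measure_Diff bounded_Int bounded_set_imp_lmeasurable sets.Int)
  qed
  ultimately show ?thesis
    using that uv by simp
qed

lemma lipschitz_measure_Int_window:
  fixes E :: "real set"
  assumes "E \<in> sets lebesgue"
  shows "lipschitz_on 2 UNIV (\<lambda>x. measure lebesgue (E \<inter> {x - p..x + q}))"
proof -
  have window: "E \<inter> {x - p..x + q} \<in> lmeasurable" for x
    by (simp add: assms bounded_Int bounded_set_imp_lmeasurable sets.Int)
  have shift: "measure lebesgue (E \<inter> {x - p..x + q}) \<le> measure lebesgue (E \<inter> {y - p..y + q}) + 2 * dist x y"
    for x y
  proof -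
    define d where "d = dist x y"
    have "E \<inter> {x - p..x + q} \<subseteq> (E \<inter> {y - p..y + q}) \<union> {y - p - d..y - p} \<union> {y + q..y + q + d}"
      by (auto simp: d_def dist_real_def)
    then have "measure lebesgue (E \<inter> {x - p..x + q})
        \<le> measure lebesgue ((E \<inter> {y - p..y + q}) \<union> {y - p - d..y - p} \<union> {y + q..y + q + d})"
      by (intro measure_mono_fmeasurable) (use window in auto)
    also have "\<dots> \<le> measure lebesgue (E \<inter> {y - p..y + q}) + measure lebesgue {y - p - d..y - p}
                    + measure lebesgue {y + q..y + q + d}"
      using window[of y] by (intro measure_Un_le[THEN order_trans] add_right_mono measure_Un_le) auto
    also have "\<dots> = measure lebesgue (E \<inter> {y - p..y + q}) + 2 * d"
      by (simp add: d_def)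
    finally show ?thesis
      by (simp add: d_def)
  qed
  show ?thesis
  proof (rule lipschitz_onI)
    fix x y :: real
    show "dist (measure lebesgue (E \<inter> {x - p..x + q})) (measure lebesgue (E \<inter> {y - p..y + q})) \<le> 2 * dist x y"
      using shift[of x y] shift[of y x] by (simp add: dist_real_def abs_minus_commute abs_le_iff)
  qed simp
qed

lemma continuous_on_measure_Int_windows:
  fixes E :: "real set"
  assumes "E \<in> sets lebesgue"
  shows "continuous_on UNIV (\<lambda>x. measure lebesgue (E \<inter> {x - r..x}))"
    and "continuous_on UNIV (\<lambda>x. measure lebesgue (E \<inter> {x..x + r}))"
  using lipschitz_on_continuous_on[OF lipschitz_measure_Int_window[OF assms, of r 0]]
    lipschitz_on_continuous_on[OF lipschitz_measure_Int_window[OF assms, of 0 r]]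
  by simp_all

lemma measure_Int_interval_le_if_gap:
  fixes E :: "real set"
  assumes E: "E \<in> sets lebesgue" and gap: "E \<inter> {v<..<s} = {}"
  shows "measure lebesgue (E \<inter> {u..s}) \<le> measure lebesgue (E \<inter> {u..v})"
proof -
  have window: "E \<inter> {u..v} \<in> lmeasurable"
    by (simp add: E bounded_Int bounded_set_imp_lmeasurable sets.Int)
  have "E \<inter> {u..s} \<subseteq> (E \<inter> {u..v}) \<union> {s}"
  proof
    fix z assume z: "z \<in> E \<inter> {u..s}"
    then have "z \<notin> {v<..<s}"
      using gap by blast
    then show "z \<in> (E \<inter> {u..v}) \<union> {s}"
      using z by auto
  qed
  moreover have "(E \<inter> {u..v}) \<union> {s} \<in> lmeasurable"
    by (intro fmeasurable.Un window negligible_imp_measurable negligible_sing)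
  ultimately have "measure lebesgue (E \<inter> {u..s}) \<le> measure lebesgue ((E \<inter> {u..v}) \<union> {s})"
    by (intro measure_mono_fmeasurable) (auto intro: E sets.Int)
  also have "\<dots> = measure lebesgue (E \<inter> {u..v})"
    using window by (intro measure_Un_null_set) (auto intro: fmeasurableD)
  finally show ?thesis .
qed

lemma weakly_nowhere_dense_not_half_dense_left:
  fixes E :: "real set"
  assumes E: "E \<in> sets lebesgue" "weakly_nowhere_dense E" and "x \<in> E" "0 < e" "0 < h"
  shows "\<exists>y\<in>E. dist y x < e \<and> \<not> half_dense_at (\<lambda>y r. measure lebesgue (E \<inter> {y - r..y})) h y"
proof (rule ccontr)
  let ?w = "\<lambda>y r. measure lebesgue (E \<inter> {y - r..y})"
  assume "\<not> ?thesis"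
  then have near: "half_dense_at ?w h y" if "y \<in> E" "dist y x < e" for y
    using that by blast
  have closed: "closed {y. half_dense_at ?w h y}"
    by (rule closed_half_dense) (rule continuous_on_measure_Int_windows(1)[OF E(1)])
  define c where "c = x - min e h / 2"
  have "c < x"
    using \<open>0 < e\<close> \<open>0 < h\<close> by (simp add: c_def)
  then obtain u v where uv: "c \<le> u" "u < v" "v \<le> x"
    and sparse: "measure lebesgue (E \<inter> {u..v}) < (v - u) / 2"
    by (rule weakly_nowhere_dense_sparse_subinterval[OF E])
  define S where "S = E \<inter> {v..x}"
  define s where "s = Inf S"
  have "x \<in> S"
    using \<open>x \<in> E\<close> uv by (simp add: S_def)
  have bdd: "bdd_below S"
    by (rule bdd_belowI[of _ v]) (simp add: S_def)
  have "s \<le> x"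
    unfolding s_def by (rule cInf_lower[OF \<open>x \<in> S\<close> bdd])
  have "v \<le> s"
    unfolding s_def using \<open>x \<in> S\<close> by (intro cInf_greatest) (auto simp: S_def)
  have "S \<subseteq> {y. half_dense_at ?w h y}"
    using near uv by (auto simp: S_def c_def dist_real_def)
  then have "closure S \<subseteq> {y. half_dense_at ?w h y}"
    by (rule closure_minimal[OF _ closed])
  then have "half_dense_at ?w h s"
    using closure_contains_Inf[OF _ bdd] \<open>x \<in> S\<close> by (auto simp: s_def)
  moreover have "0 < s - u" "s - u \<le> h"
    using uv \<open>v \<le> s\<close> \<open>s \<le> x\<close> \<open>0 < e\<close> by (auto simp: c_def)
  ultimately have "(s - u) / 2 \<le> ?w s (s - u)"
    unfolding half_dense_at_def by blast
  also have "\<dots> = measure lebesgue (E \<inter> {u..s})"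
    by simp
  also have "\<dots> \<le> measure lebesgue (E \<inter> {u..v})"
  proof (rule measure_Int_interval_le_if_gap[OF E(1)])
    have "s \<le> z" if "z \<in> E \<inter> {v<..<s}" for z
      unfolding s_def using that \<open>s \<le> x\<close> by (intro cInf_lower[OF _ bdd]) (auto simp: S_def)
    then show "E \<inter> {v<..<s} = {}"
      by force
  qed
  finally show False
    using sparse \<open>v \<le> s\<close> by (simp add: field_simps)
qed

lemma measure_lebesgue_reflect: "measure lebesgue (uminus ` S) = measure lebesgue (S :: real set)"
  using measure_lebesgue_affine[of "-1" 0 S] by simp

lemma emeasure_lebesgue_reflect: "emeasure lebesgue (uminus ` S) = emeasure lebesgue (S :: real set)"
  using emeasure_lebesgue_affine[of "-1" 0 S] by simp

lemma sets_lebesgue_reflect: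
  fixes S :: "real set"
  assumes "S \<in> sets lebesgue"
  shows "uminus ` S \<in> sets lebesgue"
  using measurable_sets[OF lebesgue_measurable_scaling[of "-1"] assms]
  by (simp add: minus_image_eq_vimage vimage_def)

lemma weakly_nowhere_dense_reflect:
  assumes "weakly_nowhere_dense E"
  shows "weakly_nowhere_dense (uminus ` E)"
  unfolding weakly_nowhere_dense_def
proof (intro allI impI)
  fix a b :: real assume "a < b"
  have "{a..b} - uminus ` E = uminus ` ({-b..-a} - E)"
    by (auto simp: minus_image_eq_vimage)
  then show "0 < emeasure lebesgue ({a..b} - uminus ` E)"
    using assms \<open>a < b\<close> by (simp add: emeasure_lebesgue_reflect weakly_nowhere_dense_def)
qed

lemma weakly_nowhere_dense_not_half_dense_right:
  fixes E :: "real set"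
  assumes E: "E \<in> sets lebesgue" "weakly_nowhere_dense E" and "x \<in> E" "0 < e" "0 < h"
  shows "\<exists>y\<in>E. dist y x < e \<and> \<not> half_dense_at (\<lambda>y r. measure lebesgue (E \<inter> {y..y + r})) h y"
proof -
  have "- x \<in> uminus ` E"
    using \<open>x \<in> E\<close> by simp
  then obtain y where y: "y \<in> uminus ` E" "dist y (- x) < e"
    and not_half: "\<not> half_dense_at (\<lambda>y r. measure lebesgue (uminus ` E \<inter> {y - r..y})) h y"
    using weakly_nowhere_dense_not_half_dense_left[OF sets_lebesgue_reflect[OF E(1)]
        weakly_nowhere_dense_reflect[OF E(2)] _ \<open>0 < e\<close> \<open>0 < h\<close>]
    by blast
  have "uminus ` E \<inter> {y - r..y} = uminus ` (E \<inter> {- y..- y + r})" for r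
    by (auto simp: minus_image_eq_vimage)
  then have "\<not> half_dense_at (\<lambda>y r. measure lebesgue (E \<inter> {y..y + r})) h (- y)"
    using not_half by (simp add: half_dense_at_def measure_lebesgue_reflect)
  moreover have "- y \<in> E" "dist (- y) x < e"
    using y by (auto simp: dist_real_def)
  ultimately show ?thesis
    by blast
qed

theorem theorem3p4:
  fixes E :: "real set"
  assumes "E \<in> sets lebesgue"
    and "weakly_nowhere_dense E"
  shows "first_category_in (top_of_set E) {x \<in> E. left_density_point E x}
       \<and> first_category_in (top_of_set E) {x \<in> E. right_density_point E x}"
proof
  show "first_category_in (top_of_set E) {x \<in> E. left_density_point E x}"
    unfolding left_density_point_def
    by (rule first_category_density_points[where w = "\<lambda>x r. measure lebesgue (E \<inter> {x - r..x})"])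
      (rule continuous_on_measure_Int_windows(1)[OF assms(1)],
       rule weakly_nowhere_dense_not_half_dense_left[OF assms])
  show "first_category_in (top_of_set E) {x \<in> E. right_density_point E x}"
    unfolding right_density_point_def
    by (rule first_category_density_points[where w = "\<lambda>x r. measure lebesgue (E \<inter> {x..x + r})"])
      (rule continuous_on_measure_Int_windows(2)[OF assms(1)],
       rule weakly_nowhere_dense_not_half_dense_right[OF assms])
qed

end
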